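(* Let $n\ge3$ and $A\subseteq[n-1]$ nonempty, let $w=\max A$ and $A'=A\setminus\{w\}$. If $w=n-1$, then $f_n(A)=2f_{n-1}(A')$.
   Context: For $m\ge1$ and a set $B$ of positive integers, $f_m(B)$ denotes the number of linear orders $q$ on $[m]$ such that for every triple $i<j<k$ in $[m]$: if $j\in B$ then $i$ is not ranked last among $\{i,j,k\}$ in $q$, and if $j\notin B$ then $k$ is not ranked first among $\{i,j,k\}$ in $q$ (i.e. $f_m(B)$ is the size of the set-alternating domain on $[m]$ generated by $B\cap[m]$). *)

theory Defs
  imports Main
begin

(* A linear order q on [m] is represented as a list enumerating {1..m} without
   repetition; q ! 0 is ranked first, the last entry is ranked last. *)
definition rank :: "nat list \<Rightarrow> nat \<Rightarrow> nat" where
  "rank q x = (LEAST p. p < length q \<and> q ! p = x)"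

definition set_alt_domain :: "nat \<Rightarrow> nat set \<Rightarrow> nat list set" where
  "set_alt_domain m B = {q. distinct q \<and> set q = {1..m} \<and>
     (\<forall>i j k. 1 \<le> i \<and> i < j \<and> j < k \<and> k \<le> m \<longrightarrow>
        (j \<in> B \<longrightarrow> \<not> (rank q j < rank q i \<and> rank q k < rank q i)) \<and>
        (j \<notin> B \<longrightarrow> \<not> (rank q k < rank q i \<and> rank q k < rank q j)))}"

definition f :: "nat \<Rightarrow> nat set \<Rightarrow> nat" where
  "f m B = card (set_alt_domain m B)"

end

theory Submission
  imports Defs "HOL-Combinatorics.Transposition"
begin

(* Write m = n - 1, so m \<in> A. The triple (i, m, n) forbids every i < m to be ranked last, hence
   every order in the domain on [n] ends in m or n. Removing a final n, or removing a final m and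
   renaming n to m, maps each of these two classes bijectively onto the domain on [m]: triples
   whose last-ranked letter is the removed one are never violated, and all other triples keep
   their relative order and their middle element. On [m] only the elements of A below m matter,
   so A may be replaced by A - {m}. *)

lemma rank_nth: "distinct q \<Longrightarrow> p < length q \<Longrightarrow> rank q (q ! p) = p"
  unfolding rank_def by (rule Least_equality) (auto simp: nth_eq_iff_index_eq)

lemma rank_less_length_and_nth:
  assumes "x \<in> set q"
  shows "rank q x < length q \<and> q ! rank q x = x"
  unfolding rank_def by (rule LeastI_ex) (use assms in \<open>auto simp: in_set_conv_nth\<close>)

lemma rank_append_single:
  "distinct (xs @ [y]) \<Longrightarrow> x \<in> set xs \<Longrightarrow> rank (xs @ [y]) x = rank xs x"
  using rank_nth[of "xs @ [y]" "rank xs x"] rank_less_length_and_nth[of x xs]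
  by (simp add: nth_append)

lemma rank_append_single_last: "distinct (xs @ [y]) \<Longrightarrow> rank (xs @ [y]) y = length xs"
  using rank_nth[of "xs @ [y]" "length xs"] by simp

lemma rank_map:
  "distinct (map g xs) \<Longrightarrow> x \<in> set xs \<Longrightarrow> rank (map g xs) (g x) = rank xs x"
  using rank_nth[of "map g xs" "rank xs x"] rank_less_length_and_nth[of x xs] by simp

definition alt_triple :: "nat list \<Rightarrow> nat set \<Rightarrow> nat \<Rightarrow> nat \<Rightarrow> nat \<Rightarrow> bool" where
  "alt_triple q B i j k \<longleftrightarrow>
     (j \<in> B \<longrightarrow> \<not> (rank q j < rank q i \<and> rank q k < rank q i)) \<and>
     (j \<notin> B \<longrightarrow> \<not> (rank q k < rank q i \<and> rank q k < rank q j))"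

lemma mem_set_alt_domain_iff:
  "q \<in> set_alt_domain m B \<longleftrightarrow> distinct q \<and> set q = {1..m} \<and>
     (\<forall>i j k. 1 \<le> i \<longrightarrow> i < j \<longrightarrow> j < k \<longrightarrow> k \<le> m \<longrightarrow> alt_triple q B i j k)"
  by (auto simp: set_alt_domain_def alt_triple_def)

lemma alt_triple_if_first_before_last: "rank q i < rank q k \<Longrightarrow> alt_triple q B i j k"
  by (auto simp: alt_triple_def)

lemma alt_triple_if_first_before_middle:
  "j \<in> B \<Longrightarrow> rank q i < rank q j \<Longrightarrow> alt_triple q B i j k"
  by (auto simp: alt_triple_def)

lemma set_alt_domain_cong:
  assumes "\<And>j. j < m \<Longrightarrow> j \<in> B \<longleftrightarrow> j \<in> C"
  shows "set_alt_domain m B = set_alt_domain m C"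
proof -
  have "alt_triple q B i j k = alt_triple q C i j k" if "j < k" "k \<le> m" for q i j k
    using assms[of j] that by (simp add: alt_triple_def)
  then show ?thesis
    unfolding set_eq_iff mem_set_alt_domain_iff by blast
qed

lemma finite_set_alt_domain: "finite (set_alt_domain m B)"
proof (rule finite_subset)
  show "set_alt_domain m B \<subseteq> {xs. set xs \<subseteq> {1..m} \<and> length xs = m}"
    by (auto simp: set_alt_domain_def dest: distinct_card)
  show "finite {xs. set xs \<subseteq> {1..m} \<and> length xs = m}"
    by (rule finite_lists_length_eq) simp
qed

lemma append_Suc_mem_set_alt_domain_iff:
  "q @ [Suc m] \<in> set_alt_domain (Suc m) B \<longleftrightarrow> q \<in> set_alt_domain m B"
proof (cases "distinct q \<and> set q = {1..m}")
  case True
  then have q: "distinct q" "set q = {1..m}" by auto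
  have "alt_triple (q @ [Suc m]) B i j k \<longleftrightarrow> (k \<le> m \<longrightarrow> alt_triple q B i j k)"
    if "1 \<le> i" "i < j" "j < k" "k \<le> Suc m" for i j k
  proof (cases "k = Suc m")
    case True
    with that q show ?thesis
      using rank_less_length_and_nth[of i q]
      by (auto intro: alt_triple_if_first_before_last simp: rank_append_single rank_append_single_last)
  next
    case False
    with that q show ?thesis
      by (auto simp: alt_triple_def rank_append_single)
  qed
  with q show ?thesis
    unfolding mem_set_alt_domain_iff by (auto simp: le_Suc_eq)
next
  case False
  have "set q = {1..Suc m} - {Suc m}" if "distinct (q @ [Suc m])" "set (q @ [Suc m]) = {1..Suc m}"
    using that by auto
  moreover have "{1..Suc m} - {Suc m} = {1..m}"
    by auto
  ultimately show ?thesis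
    using False unfolding mem_set_alt_domain_iff by auto
qed

lemma distinct_set_transpose_append_iff:
  fixes m :: nat
  defines "\<tau> \<equiv> Transposition.transpose m (Suc m)"
  assumes "0 < m"
  shows "distinct (map \<tau> q @ [m]) \<and> set (map \<tau> q @ [m]) = {1..Suc m} \<longleftrightarrow>
    distinct q \<and> set q = {1..m}"
proof -
  have \<tau>_image: "\<tau> ` {1..m} = {1..Suc m} - {m}"
    using \<open>0 < m\<close> by (force simp: \<tau>_def transpose_def)
  have "set (map \<tau> q @ [m]) = {1..Suc m} \<longleftrightarrow> \<tau> ` set q = {1..Suc m} - {m}"
    if "m \<notin> \<tau> ` set q"
    using that \<open>0 < m\<close> by auto
  moreover have "\<tau> ` set q = \<tau> ` {1..m} \<longleftrightarrow> set q = {1..m}"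
    by (simp add: \<tau>_def inj_image_eq_iff inj_transpose)
  ultimately show ?thesis
    using \<tau>_image by (auto simp: distinct_map \<tau>_def)
qed

lemma rank_transpose_append:
  fixes m :: nat
  defines "\<tau> \<equiv> Transposition.transpose m (Suc m)"
  assumes "distinct q" "set q = {1..m}" and "x \<in> set q"
  shows "rank (map \<tau> q @ [m]) (\<tau> x) = rank q x" and "rank q x < rank (map \<tau> q @ [m]) m"
proof -
  have "distinct (map \<tau> q @ [m])"
    using assms(2,3) by (auto simp: distinct_map \<tau>_def transpose_def)
  then show "rank (map \<tau> q @ [m]) (\<tau> x) = rank q x" and "rank q x < rank (map \<tau> q @ [m]) m"
    using assms(4) rank_less_length_and_nth[OF assms(4)]
    by (simp_all add: rank_append_single rank_map rank_append_single_last)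
qed

lemma alt_triples_transpose_append_iff:
  fixes m :: nat
  defines "\<tau> \<equiv> Transposition.transpose m (Suc m)"
  assumes q: "distinct q" "set q = {1..m}" and "m \<in> B"
  shows "(\<forall>i j k. 1 \<le> i \<longrightarrow> i < j \<longrightarrow> j < k \<longrightarrow> k \<le> Suc m \<longrightarrow> alt_triple (map \<tau> q @ [m]) B i j k) \<longleftrightarrow>
    (\<forall>i j k. 1 \<le> i \<longrightarrow> i < j \<longrightarrow> j < k \<longrightarrow> k \<le> m \<longrightarrow> alt_triple q B i j k)"
proof -
  let ?p = "map \<tau> q @ [m]"
  have \<tau>_fixes: "\<tau> x = x" if "x < m" for x
    using that by (simp add: \<tau>_def)
  note rank_p = rank_transpose_append[OF q, folded \<tau>_def]
  have triple_transfer: "alt_triple ?p B i j (\<tau> k) \<longleftrightarrow> alt_triple q B i j k"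
    if "1 \<le> i" "i < j" "j < m" "k \<in> set q" for i j k
    using rank_p(1)[of i] rank_p(1)[of j] rank_p(1)[of k] \<tau>_fixes[of i] \<tau>_fixes[of j] that q
    by (simp add: alt_triple_def)
  have before_m: "rank ?p i < rank ?p m" if "1 \<le> i" "i < m" for i
    using rank_p[of i] \<tau>_fixes[of i] that q by simp
  show ?thesis
  proof (intro iffI allI impI)
    fix i j k
    assume p_ok: "\<forall>i j k. 1 \<le> i \<longrightarrow> i < j \<longrightarrow> j < k \<longrightarrow> k \<le> Suc m \<longrightarrow> alt_triple ?p B i j k"
      and ijk: "1 \<le> i" "i < j" "j < k" "k \<le> m"
    then have "j < \<tau> k" "\<tau> k \<le> Suc m"
      by (auto simp: \<tau>_def transpose_def)
    with p_ok ijk have "alt_triple ?p B i j (\<tau> k)"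
      by auto
    with triple_transfer ijk q show "alt_triple q B i j k"
      by auto
  next
    fix i j k
    assume q_ok: "\<forall>i j k. 1 \<le> i \<longrightarrow> i < j \<longrightarrow> j < k \<longrightarrow> k \<le> m \<longrightarrow> alt_triple q B i j k"
      and ijk: "1 \<le> i" "i < j" "j < k" "k \<le> Suc m"
    consider "k = m" | "j = m" | "j < m" "k \<noteq> m"
      using ijk by linarith
    then show "alt_triple ?p B i j k"
    proof cases
      case 1
      with ijk before_m show ?thesis
        by (auto intro: alt_triple_if_first_before_last)
    next
      case 2
      with ijk before_m \<open>m \<in> B\<close> show ?thesis
        by (auto intro: alt_triple_if_first_before_middle)
    next
      case 3
      with ijk have "\<tau> k \<in> set q" "j < \<tau> k" "\<tau> k \<le> m" "\<tau> (\<tau> k) = k"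
        using q by (auto simp: \<tau>_def transpose_def)
      with 3 ijk q_ok triple_transfer[of i j "\<tau> k"] show ?thesis
        by auto
    qed
  qed
qed

lemma transpose_append_mem_set_alt_domain_iff:
  fixes m :: nat
  defines "\<tau> \<equiv> Transposition.transpose m (Suc m)"
  assumes "0 < m" and "m \<in> B"
  shows "map \<tau> q @ [m] \<in> set_alt_domain (Suc m) B \<longleftrightarrow> q \<in> set_alt_domain m B"
  using distinct_set_transpose_append_iff[OF \<open>0 < m\<close>, of q]
    alt_triples_transpose_append_iff[of q m B] \<open>m \<in> B\<close>
  unfolding mem_set_alt_domain_iff \<tau>_def by blast

lemma last_mem_set_alt_domain:
  assumes "q \<in> set_alt_domain (Suc m) B" and "m \<in> B"
  shows "last q = m \<or> last q = Suc m"
proof (rule ccontr)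
  assume not_top: "\<not> (last q = m \<or> last q = Suc m)"
  from assms(1) have q: "distinct q" "set q = {1..Suc m}"
    and triples: "\<And>i j k. 1 \<le> i \<Longrightarrow> i < j \<Longrightarrow> j < k \<Longrightarrow> k \<le> Suc m \<Longrightarrow> alt_triple q B i j k"
    by (auto simp: mem_set_alt_domain_iff)
  have len: "length q = Suc m"
    using distinct_card[OF q(1)] q(2) by simp
  then have "q \<noteq> []"
    by auto
  then have last_in: "last q \<in> set q"
    by simp
  have rank_last: "rank q (last q) = m"
    using rank_nth[OF q(1), of m] len \<open>q \<noteq> []\<close> by (simp add: last_conv_nth)
  have rank_other: "rank q x < m" if "x \<in> set q" "x \<noteq> last q" for x
    using rank_less_length_and_nth[OF that(1)] rank_less_length_and_nth[OF last_in] that(2) rank_last len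
    by (metis less_SucE)
  have "rank q m < m" "rank q (Suc m) < m"
    using rank_other[of m] rank_other[of "Suc m"] not_top q(2) len by auto
  moreover have "1 \<le> last q" "last q < m"
    using last_in not_top q(2) by auto
  ultimately show False
    using triples[of "last q" m "Suc m"] rank_last \<open>m \<in> B\<close> by (simp add: alt_triple_def)
qed

lemma set_alt_domain_Suc_eq:
  fixes m :: nat
  defines "\<tau> \<equiv> Transposition.transpose m (Suc m)"
  assumes "0 < m" and "m \<in> B"
  shows "set_alt_domain (Suc m) B =
    (\<lambda>q. q @ [Suc m]) ` set_alt_domain m B \<union> (\<lambda>q. map \<tau> q @ [m]) ` set_alt_domain m B"
proof (intro equalityI subsetI)
  fix p
  assume p: "p \<in> set_alt_domain (Suc m) B"
  then have "p \<noteq> []"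
    by (auto simp: set_alt_domain_def)
  then have p_eq: "p = butlast p @ [last p]"
    by simp
  from last_mem_set_alt_domain[OF p \<open>m \<in> B\<close>]
  show "p \<in> (\<lambda>q. q @ [Suc m]) ` set_alt_domain m B \<union> (\<lambda>q. map \<tau> q @ [m]) ` set_alt_domain m B"
  proof
    assume "last p = m"
    moreover have "butlast p = map \<tau> (map \<tau> (butlast p))"
      by (simp add: \<tau>_def)
    ultimately have "p = map \<tau> (map \<tau> (butlast p)) @ [m]" "map \<tau> (butlast p) \<in> set_alt_domain m B"
      using p p_eq transpose_append_mem_set_alt_domain_iff[OF assms(2,3), of "map \<tau> (butlast p)"]
      by (simp_all add: \<tau>_def)
    then show ?thesis
      by blast
  next
    assume "last p = Suc m"
    then have "p = butlast p @ [Suc m]" "butlast p \<in> set_alt_domain m B"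
      using p p_eq append_Suc_mem_set_alt_domain_iff[of "butlast p" m B] by auto
    then show ?thesis
      by blast
  qed
next
  fix p
  assume "p \<in> (\<lambda>q. q @ [Suc m]) ` set_alt_domain m B \<union> (\<lambda>q. map \<tau> q @ [m]) ` set_alt_domain m B"
  then show "p \<in> set_alt_domain (Suc m) B"
    using append_Suc_mem_set_alt_domain_iff transpose_append_mem_set_alt_domain_iff[OF assms(2,3)]
    by (auto simp: \<tau>_def)
qed

lemma f_Suc_eq_double:
  assumes "0 < m" and "m \<in> B"
  shows "f (Suc m) B = 2 * f m B"
proof -
  let ?\<tau> = "Transposition.transpose m (Suc m)"
  have "inj_on (\<lambda>q. q @ [Suc m]) (set_alt_domain m B)"
    by (rule inj_onI) simp
  moreover have "inj_on (\<lambda>q. map ?\<tau> q @ [m]) (set_alt_domain m B)"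
    by (rule inj_onI) (simp add: inj_transpose)
  moreover have "(\<lambda>q. q @ [Suc m]) ` set_alt_domain m B \<inter> (\<lambda>q. map ?\<tau> q @ [m]) ` set_alt_domain m B = {}"
    by auto
  ultimately show ?thesis
    unfolding f_def set_alt_domain_Suc_eq[OF assms]
    by (simp add: card_Un_disjoint card_image finite_set_alt_domain)
qed

theorem proposition4:
  fixes n :: nat and A :: "nat set"
  assumes "n \<ge> 3" and "A \<subseteq> {1..n-1}" and "A \<noteq> {}"
    and "Max A = n - 1"
  shows "f n A = 2 * f (n - 1) (A - {Max A})"
proof -
  define m where "m = n - 1"
  have n: "n = Suc m" and "0 < m"
    using assms(1) by (auto simp: m_def)
  have "m \<in> A"
    using Max_in[OF finite_subset[OF assms(2)] assms(3)] assms(4) by (simp add: m_def)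
  have "f n A = 2 * f m A"
    using f_Suc_eq_double[OF \<open>0 < m\<close> \<open>m \<in> A\<close>] by (simp add: n)
  also have "f m A = f m (A - {m})"
    unfolding f_def by (rule arg_cong[OF set_alt_domain_cong]) auto
  finally show ?thesis
    by (simp add: assms(4) m_def)
qed

end
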